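(* Let $\mathcal X$ be a Polish space with metric and $\sigma$-finite reference measure, $\pi,\pi_Y$ probability measures with densities, $w=\pi/\pi_Y$ with $|w|_\infty<\infty$, and let $\{Y_n\}_{n\ge0}$ be an $\mathcal X$-valued process (started at $Y_0=y_0$). Assume: (i) there is a finite constant $C$ such that for every measurable $f$ with $|f|_\infty\le1$ and all $x>0$, \[ \sup_n\mathbb P\Big(\Big|\frac1{\sqrt n}\sum_{j=1}^n(f(Y_j)-\pi_Y(f))\Big|>x\Big)\le C\exp\Big(-\frac{x^2}{C\sigma^2(f)}\Big),\quad\sigma^2(f)=\int f^2\,\mathrm d\pi_Y; \] (ii) $w$ is continuous and $\sup_{x\in\mathcal X}\phi(x)/w^2(x)<\infty$, where $\phi(x)=\pi_Y(\{z:w(z)\le w(x)\})$. Let $g:\mathcal X\to\mathbb R$ be continuous with $|g|_\infty\le1$. Define $\alpha(x,z)=1\wedge\frac{w(z)}{w(x)}$, $H_g(x,z)=\alpha(x,z)(g(z)-g(x))$, the class $\mathcal F_g=\{z\mapsto H_g(x,z):x\in\mathcal X\}$, and the empirical process $\mathbb G_n(h)=\frac1{\sqrt n}\sum_{j=1}^n(h(Y_j)-\pi_Y(h))$, $h\in\mathcal F_g$. Then \[ \mathbb E\Big(\sup_{h\in\mathcal F_g}|\mathbb G_n(h)|\Big)\le C \] for a constant $C$ that does not depend on $n$.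
   Context: $|f|_\infty=\sup_x|f(x)|$; $\pi_Y(h)=\int h\,\mathrm d\pi_Y$. *)

theory Defs
  imports "HOL-Probability.Probability"
begin

text \<open>Importance weight w = pi / pi_Y, given via densities p (of pi) and q (of pi_Y).\<close>
definition weight :: "('a \<Rightarrow> real) \<Rightarrow> ('a \<Rightarrow> real) \<Rightarrow> 'a \<Rightarrow> real" where
  "weight p q x = p x / q x"

definition acc_alpha :: "('a \<Rightarrow> real) \<Rightarrow> 'a \<Rightarrow> 'a \<Rightarrow> real" where
  "acc_alpha w x z = min 1 (w z / w x)"

definition H_g :: "('a \<Rightarrow> real) \<Rightarrow> ('a \<Rightarrow> real) \<Rightarrow> 'a \<Rightarrow> 'a \<Rightarrow> real" where
  "H_g w g x z = acc_alpha w x z * (g z - g x)"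

definition emp_proc :: "'a measure \<Rightarrow> (nat \<Rightarrow> 'o \<Rightarrow> 'a) \<Rightarrow> nat \<Rightarrow> ('a \<Rightarrow> real) \<Rightarrow> 'o \<Rightarrow> real" where
  "emp_proc piY Y n h \<omega> = (1 / sqrt (real n)) * (\<Sum>j=1..n. (h (Y j \<omega>) - integral\<^sup>L piY h))"

end

theory Submission
  imports Defs
begin

text \<open>With \<open>u = 1/w(x)\<close> and \<open>m\<^sub>u = min 1 (u w)\<close> one has \<open>H\<^sub>g(x, \<cdot>) = g m\<^sub>u - g(x) m\<^sub>u\<close>, so it
  suffices to bound \<open>E sup\<^sub>u |G\<^sub>n(\<psi> m\<^sub>u)|\<close> for \<open>\<psi> = g\<close> and \<open>\<psi> = 1\<close>. The functions \<open>m\<^sub>u\<close>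
  increase with \<open>u\<close> and their means \<open>F(u) = \<pi>\<^sub>Y(m\<^sub>u)\<close> are Lipschitz because \<open>w\<close> is bounded, so
  inverting \<open>F\<close> on the grid \<open>i 16\<^sup>-\<^sup>k\<close> yields a chain whose level \<open>k\<close> has at most
  \<open>16\<^sup>k + 1\<close> links of \<open>\<pi>\<^sub>Y\<close>-mass \<open>O(16\<^sup>-\<^sup>k)\<close>. The subgaussian tail bounds \<open>E G\<^sub>n(f)\<^sup>4\<close> by
  \<open>O(\<pi>\<^sub>Y(f\<^sup>2)\<^sup>2)\<close>, and \<open>max\<^sub>i |X\<^sub>i| \<le> a + a\<^sup>-\<^sup>3 \<Sum>\<^sub>i X\<^sub>i\<^sup>4\<close> with \<open>a = 2\<^sup>-\<^sup>k\<close> makes level \<open>k\<close>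
  cost \<open>O(2\<^sup>-\<^sup>k)\<close>. Stopping the chain at level \<open>n\<close>, the last bracket adds at most
  \<open>2\<surd>n 16\<^sup>-\<^sup>n\<close>, so the bound is uniform in \<open>n\<close>.\<close>

lemma square_add_two_le_two_power: "(real m + 2)^2 \<le> 2^(m+3)"
proof (induction m)
  case 0 then show ?case by simp
next
  case (Suc m)
  have "1 \<le> real m * real m + real m * 2 \<or> m = 0"
    by (cases m) (simp_all add: algebra_simps)
  then have "(real (Suc m) + 2)^2 \<le> 2 * (real m + 2)^2 \<or> m = 0"
    by (auto simp: power2_eq_square algebra_simps)
  then show ?case using Suc by (auto simp: power_add)
qed

lemma square_mul_exp_le_geometric: "(real m + 2)^2 * exp (-(2*(real m+1))) \<le> 2 * (1/2)^m"
proof -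
  have "exp (-1::real) \<le> 1/2"
    using exp_ge_add_one_self[of 1] by (simp add: exp_minus field_simps)
  then have "exp (-1) ^ (2*m+2) \<le> (1/2::real)^(2*m+2)" by (rule power_mono) simp
  moreover have "exp (-(2*(real m+1))) = exp (-1) ^ (2*m+2)"
    by (subst exp_of_nat_mult[symmetric]) (simp add: algebra_simps)
  ultimately have "(real m + 2)^2 * exp (-(2*(real m+1))) \<le> 2^(m+3) * (1/2)^(2*m+2)"
    by (intro mult_mono square_add_two_le_two_power) auto
  also have "\<dots> = 2 * (1/2)^m"
    by (simp add: power_add power_mult field_simps power2_eq_square)
  finally show ?thesis .
qed

lemma fourth_power_le_layer_sum:
  fixes x c :: real
  assumes c: "0 < c"
  shows "ennreal (x^4) \<le> ennreal (4*c\<^sup>2)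
           + (\<Sum>m. ennreal (4*c\<^sup>2*(real m+2)\<^sup>2) * indicator {t. \<bar>t\<bar> > sqrt (2*(real m+1)*c)} x)"
proof -
  define t where "t = x\<^sup>2 / c"
  have t0: "0 \<le> t" using c by (simp add: t_def)
  have x4: "x^4 = c\<^sup>2 * t\<^sup>2" using c by (simp add: t_def power2_eq_square field_simps eval_nat_numeral)
  show ?thesis
  proof (cases "t \<le> 2")
    case True
    then have "t\<^sup>2 \<le> 2\<^sup>2" using t0 by (intro power_mono)
    then have "x^4 \<le> 4*c\<^sup>2" unfolding x4 using c by simp
    then show ?thesis by (rule order_trans[OF ennreal_leI]) simp_all
  next
    case False
    define N where "N = nat (\<lceil>t/2\<rceil> - 2)"
    have "2 \<le> \<lceil>t/2\<rceil>" using False by (simp add: le_ceiling_iff)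
    then have "real N = of_int \<lceil>t/2\<rceil> - 2" by (simp add: N_def)
    then have lo: "real N + 1 < t/2" and hi: "t/2 \<le> real N + 2"
      using ceiling_correct[of "t/2"] by linarith+
    have "sqrt (2*(real N+1)*c) < sqrt (x\<^sup>2)"
      using lo c by (intro real_sqrt_less_mono) (simp add: t_def field_simps)
    then have x_in: "x \<in> {t. \<bar>t\<bar> > sqrt (2*(real N+1)*c)}" by simp
    have "t\<^sup>2 \<le> 4*(real N+2)\<^sup>2"
      using power_mono[of t "2*(real N+2)" 2] hi t0 by (simp add: power2_eq_square algebra_simps)
    then have "x^4 \<le> 4*c\<^sup>2*(real N+2)\<^sup>2"
      unfolding x4 using c by (simp add: mult_left_mono)
    then have "ennreal (x^4) \<le> ennreal (4*c\<^sup>2*(real N+2)\<^sup>2) * indicator {t. \<bar>t\<bar> > sqrt (2*(real N+1)*c)} x"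
      using x_in by (simp add: ennreal_leI)
    also have "\<dots> \<le> (\<Sum>m. ennreal (4*c\<^sup>2*(real m+2)\<^sup>2) * indicator {t. \<bar>t\<bar> > sqrt (2*(real m+1)*c)} x)"
      using sum_le_suminf[OF summableI, of "{N}"] by simp
    finally show ?thesis by (rule order_trans) simp
  qed
qed

text \<open>Cut \<open>|X|\<close> at the levels \<open>\<surd>(2(m+1)c\<sigma>)\<close>, whose tail probabilities decay geometrically.\<close>
lemma (in prob_space) fourth_moment_le_of_subgaussian_tail:
  assumes X: "X \<in> borel_measurable M" and c: "1 \<le> c" and \<sigma>: "0 < \<sigma>"
    and tail: "\<And>x. x > 0 \<Longrightarrow> prob {\<omega>\<in>space M. \<bar>X \<omega>\<bar> > x} \<le> c * exp (-(x\<^sup>2/(c*\<sigma>)))"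
  shows "(\<integral>\<^sup>+\<omega>. ennreal ((X \<omega>)^4) \<partial>M) \<le> ennreal ((c*\<sigma>)\<^sup>2 * (4 + 16*c))"
proof -
  define \<tau> where "\<tau> = c*\<sigma>"
  have \<tau>: "\<tau> > 0" using c \<sigma> by (simp add: \<tau>_def)
  define A where "A m = {\<omega>\<in>space M. \<bar>X \<omega>\<bar> > sqrt (2*(real m+1)*\<tau>)}" for m
  have A_sets: "A m \<in> events" for m unfolding A_def using X by measurable
  have prob_A: "prob (A m) \<le> c * exp (-(2*(real m+1)))" for m
  proof -
    have "(sqrt (2*(real m+1)*\<tau>))\<^sup>2 / (c*\<sigma>) = 2*(real m+1)" using \<tau> c \<sigma> by (simp add: \<tau>_def)
    then show ?thesis using tail[of "sqrt (2*(real m+1)*\<tau>)"] \<tau> by (simp add: A_def)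
  qed
  have term_le: "ennreal (4*\<tau>\<^sup>2*(real m+2)\<^sup>2) * emeasure M (A m) \<le> ennreal (8*\<tau>\<^sup>2*c*(1/2)^m)" for m
  proof -
    have "4*\<tau>\<^sup>2*(real m+2)\<^sup>2 * prob (A m) \<le> 4*\<tau>\<^sup>2*c * ((real m+2)\<^sup>2 * exp (-(2*(real m+1))))"
      using mult_left_mono[OF prob_A, of "4*\<tau>\<^sup>2*(real m+2)\<^sup>2"] by (simp add: mult_ac)
    also have "\<dots> \<le> 4*\<tau>\<^sup>2*c * (2*(1/2)^m)"
      using c by (intro mult_left_mono square_mul_exp_le_geometric) simp
    finally show ?thesis by (simp add: emeasure_eq_measure ennreal_mult[symmetric] ennreal_leI)
  qed
  have geometric: "(\<Sum>m. ennreal (8*\<tau>\<^sup>2*c*(1/2)^m)) = ennreal (16*\<tau>\<^sup>2*c)"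
  proof (rule suminf_ennreal_eq)
    have "(\<lambda>m. 8*\<tau>\<^sup>2*c*(1/2::real)^m) sums (8*\<tau>\<^sup>2*c*(1/(1-1/2)))"
      by (intro sums_mult geometric_sums) simp
    then show "(\<lambda>m. 8*\<tau>\<^sup>2*c*(1/2::real)^m) sums (16*\<tau>\<^sup>2*c)" by (simp add: mult.assoc)
  qed (use c in simp)
  have "(\<integral>\<^sup>+\<omega>. ennreal ((X \<omega>)^4) \<partial>M)
      \<le> (\<integral>\<^sup>+\<omega>. ennreal (4*\<tau>\<^sup>2) + (\<Sum>m. ennreal (4*\<tau>\<^sup>2*(real m+2)\<^sup>2) * indicator (A m) \<omega>) \<partial>M)"
    using fourth_power_le_layer_sum[OF \<tau>] by (intro nn_integral_mono) (simp add: A_def indicator_def)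
  also have "\<dots> = ennreal (4*\<tau>\<^sup>2) + (\<Sum>m. ennreal (4*\<tau>\<^sup>2*(real m+2)\<^sup>2) * emeasure M (A m))"
    using A_sets by (simp add: nn_integral_add nn_integral_suminf nn_integral_cmult_indicator emeasure_space_1)
  also have "\<dots> \<le> ennreal (4*\<tau>\<^sup>2) + ennreal (16*\<tau>\<^sup>2*c)"
    unfolding geometric[symmetric] by (intro add_left_mono suminf_le summableI term_le)
  also have "\<dots> = ennreal ((c*\<sigma>)\<^sup>2 * (4 + 16*c))"
    using c by (simp add: ennreal_plus[symmetric] \<tau>_def algebra_simps del: ennreal_plus)
  finally show ?thesis .
qed

lemma abs_le_add_sum_fourth_powers:
  fixes X :: "'i \<Rightarrow> real"
  assumes "finite I" "i \<in> I" "0 < a"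
  shows "\<bar>X i\<bar> \<le> a + (\<Sum>j\<in>I. (X j)^4) / a^3"
proof (cases "\<bar>X i\<bar> \<le> a")
  case True
  moreover have "0 \<le> (\<Sum>j\<in>I. (X j)^4) / a^3" using assms by (simp add: sum_nonneg)
  ultimately show ?thesis by simp
next
  case False
  have "\<bar>X i\<bar> * a^3 \<le> \<bar>X i\<bar> * \<bar>X i\<bar>^3"
    using False assms by (intro mult_left_mono power_mono) auto
  also have "\<dots> = (X i)^4" by (simp add: eval_nat_numeral power_even_abs)
  also have "\<dots> \<le> (\<Sum>j\<in>I. (X j)^4)" using assms by (intro member_le_sum) simp_all
  finally have "\<bar>X i\<bar> * a^3 \<le> (\<Sum>j\<in>I. (X j)^4)" .
  then have "\<bar>X i\<bar> \<le> (\<Sum>j\<in>I. (X j)^4) / a^3" using assms by (simp add: field_simps)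
  then show ?thesis using assms by simp
qed

lemma power2_le_abs_of_abs_le_one:
  fixes x :: real
  assumes "\<bar>x\<bar> \<le> 1"
  shows "x\<^sup>2 \<le> \<bar>x\<bar>"
proof -
  have "\<bar>x\<bar> * \<bar>x\<bar> \<le> 1 * \<bar>x\<bar>" using assms by (rule mult_right_mono) simp
  then show ?thesis by (simp add: power2_eq_square)
qed

lemma grid_fourth_moment_scaling:
  fixes K0 c :: real
  assumes K0: "0 \<le> K0" and c: "0 \<le> c" "c \<le> 16"
  shows "8^k * ((16^k + 1) * K0 * (c/16^k)\<^sup>2) \<le> 512 * K0 * (1/2)^k"
proof -
  define x :: real where "x = 16^k"
  have x: "1 \<le> x" by (simp add: x_def)
  have "8^k * ((x + 1) * K0 * (c/x)\<^sup>2) = (8^k / x) * ((x + 1)/x) * (K0 * c\<^sup>2)"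
    using x by (simp add: power2_eq_square field_simps)
  also have "\<dots> \<le> (8^k / x) * 2 * (K0 * 256)"
  proof (rule mult_mono)
    show "(8^k / x) * ((x + 1)/x) \<le> (8^k / x) * 2"
      using x by (intro mult_left_mono) (simp_all add: field_simps)
    show "K0 * c\<^sup>2 \<le> K0 * 256"
      using K0 c power_mono[OF c(2) c(1), of 2] by (intro mult_left_mono) simp_all
  qed (use x K0 in simp_all)
  also have "8^k / x = (1/2::real)^k" by (simp add: x_def power_divide[symmetric])
  finally show ?thesis by (simp add: x_def mult_ac)
qed

lemma sum_power_half_le_two: "(\<Sum>k\<le>K. (1/2::real)^k) \<le> 2"
proof -
  have "(\<Sum>k\<le>K. (1/2::real)^k) = 2 - (1/2)^K" by (induction K) (auto simp: field_simps)
  then show ?thesis by simp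
qed

lemma (in prob_space) nn_integral_affine_le:
  assumes S: "S \<in> borel_measurable M" "\<And>\<omega>. 0 \<le> S \<omega>" and ab: "0 \<le> a" "0 \<le> b"
    and bound: "(\<integral>\<^sup>+\<omega>. ennreal (S \<omega>) \<partial>M) \<le> t"
  shows "(\<integral>\<^sup>+\<omega>. ennreal (a + b * S \<omega>) \<partial>M) \<le> ennreal a + ennreal b * t"
proof -
  have "(\<integral>\<^sup>+\<omega>. ennreal (a + b * S \<omega>) \<partial>M) = (\<integral>\<^sup>+\<omega>. ennreal a + ennreal b * ennreal (S \<omega>) \<partial>M)"
    using ab S by (simp add: ennreal_plus ennreal_mult)
  also have "\<dots> = ennreal a + ennreal b * (\<integral>\<^sup>+\<omega>. ennreal (S \<omega>) \<partial>M)"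
    using S by (simp add: nn_integral_add nn_integral_cmult emeasure_space_1)
  finally show ?thesis using bound by (metis add_left_mono mult_left_mono zero_le)
qed

text \<open>The tail hypothesis of the theorem degenerates when \<open>C \<le> 0\<close> or \<open>\<pi>\<^sub>Y(f\<^sup>2) = 0\<close>; with the
  constant \<open>max 1 C\<close> it becomes uniform and monotone in the variance proxy.\<close>
lemma subgaussian_bound_relax:
  fixes C s \<sigma> x :: real
  assumes s: "0 \<le> s" "s \<le> \<sigma>" and \<sigma>: "0 < \<sigma>"
  shows "(if s = 0 then 0 else C * exp (- (x\<^sup>2 / (C * s)))) \<le> max 1 C * exp (-(x\<^sup>2/(max 1 C * \<sigma>)))"
proof (cases "s = 0 \<or> C \<le> 0")
  case True
  then have "(if s = 0 then 0 else C * exp (- (x\<^sup>2 / (C * s)))) \<le> 0"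
    by (auto simp: mult_nonpos_nonneg)
  also have "0 \<le> max 1 C * exp (-(x\<^sup>2/(max 1 C * \<sigma>)))" by simp
  finally show ?thesis .
next
  case False
  then have "C * s \<le> max 1 C * \<sigma>" using s by (intro mult_mono) auto
  then have "x\<^sup>2 / (max 1 C * \<sigma>) \<le> x\<^sup>2 / (C * s)"
    using False s by (intro divide_left_mono) auto
  then have "C * exp (- (x\<^sup>2 / (C * s))) \<le> max 1 C * exp (-(x\<^sup>2/(max 1 C * \<sigma>)))"
    using False by (intro mult_mono) auto
  then show ?thesis using False by simp
qed

locale subgaussian_empirical_process =
  fixes P :: "'a::topological_space measure" and M :: "'o measure" and Y :: "nat \<Rightarrow> 'o \<Rightarrow> 'a"
    and c :: real
  assumes prob_P: "prob_space P" and sets_P: "sets P = sets borel"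
    and prob_M: "prob_space M" and Y_measurable: "\<And>n. Y n \<in> measurable M borel"
    and c_ge_1: "1 \<le> c"
    and tail: "\<And>f n x \<sigma>. f \<in> borel_measurable borel \<Longrightarrow> (\<forall>z. \<bar>f z\<bar> \<le> 1) \<Longrightarrow> 0 < x \<Longrightarrow> 0 < \<sigma>
        \<Longrightarrow> (\<integral>z. (f z)\<^sup>2 \<partial>P) \<le> \<sigma>
        \<Longrightarrow> measure M {\<omega>\<in>space M. \<bar>emp_proc P Y n f \<omega>\<bar> > x} \<le> c * exp (-(x\<^sup>2/(c*\<sigma>)))"
begin

lemma integrable_P_of_bounded:
  assumes "f \<in> borel_measurable borel" "\<And>z. \<bar>f z\<bar> \<le> (B::real)"
  shows "integrable P f"
proof -
  interpret prob_space P by (rule prob_P)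
  show ?thesis
    using assms by (intro integrable_const_bound[of _ B]) (auto simp: measurable_cong_sets[OF sets_P refl])
qed

lemma emp_proc_measurable:
  assumes "f \<in> borel_measurable borel"
  shows "emp_proc P Y n f \<in> borel_measurable M"
proof -
  have "(\<lambda>\<omega>. f (Y j \<omega>)) \<in> borel_measurable M" for j by (rule measurable_compose[OF Y_measurable assms])
  then show ?thesis unfolding emp_proc_def[abs_def]
    by (intro borel_measurable_times borel_measurable_const borel_measurable_sum borel_measurable_diff) auto
qed

lemma emp_proc_lincomb:
  assumes "f \<in> borel_measurable borel" "\<And>z. \<bar>f z\<bar> \<le> Bf" "g \<in> borel_measurable borel" "\<And>z. \<bar>g z\<bar> \<le> Bg"
  shows "emp_proc P Y n (\<lambda>z. a * f z + b * g z) \<omega> = a * emp_proc P Y n f \<omega> + b * emp_proc P Y n g \<omega>"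
proof -
  have "integral\<^sup>L P (\<lambda>z. a * f z + b * g z) = a * integral\<^sup>L P f + b * integral\<^sup>L P g"
    using integrable_P_of_bounded[OF assms(1,2)] integrable_P_of_bounded[OF assms(3,4)] by simp
  then show ?thesis
    unfolding emp_proc_def by (simp add: sum.distrib sum_distrib_left algebra_simps sum_subtractf)
qed

lemma emp_proc_diff:
  assumes "f \<in> borel_measurable borel" "\<And>z. \<bar>f z\<bar> \<le> Bf" "g \<in> borel_measurable borel" "\<And>z. \<bar>g z\<bar> \<le> Bg"
  shows "emp_proc P Y n (\<lambda>z. f z - g z) \<omega> = emp_proc P Y n f \<omega> - emp_proc P Y n g \<omega>"
  using emp_proc_lincomb[OF assms, where a=1 and b="-1"] by simp

lemma abs_emp_proc_le_of_dominated:
  assumes n: "0 < n" and f: "f \<in> borel_measurable borel" "\<And>z. \<bar>f z\<bar> \<le> Bf"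
    and b: "b \<in> borel_measurable borel" "\<And>z. \<bar>b z\<bar> \<le> Bg" and f_le_b: "\<And>z. \<bar>f z\<bar> \<le> b z"
  shows "\<bar>emp_proc P Y n f \<omega>\<bar> \<le> emp_proc P Y n b \<omega> + 2 * sqrt n * integral\<^sup>L P b"
proof -
  have "\<bar>integral\<^sup>L P f\<bar> \<le> integral\<^sup>L P (\<lambda>z. \<bar>f z\<bar>)" by (rule integral_abs_bound)
  also have "\<dots> \<le> integral\<^sup>L P b"
    using integrable_P_of_bounded[OF f] integrable_P_of_bounded[OF b] f_le_b by (intro integral_mono) auto
  finally have int_f: "\<bar>integral\<^sup>L P f\<bar> \<le> integral\<^sup>L P b" .
  have "\<bar>f (Y j \<omega>) - integral\<^sup>L P f\<bar> \<le> b (Y j \<omega>) + integral\<^sup>L P b" for j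
    using int_f f_le_b[of "Y j \<omega>"] by linarith
  then have "\<bar>\<Sum>j=1..n. (f (Y j \<omega>) - integral\<^sup>L P f)\<bar> \<le> (\<Sum>j=1..n. (b (Y j \<omega>) + integral\<^sup>L P b))"
    by (intro order_trans[OF sum_abs] sum_mono)
  also have "\<dots> = (\<Sum>j=1..n. (b (Y j \<omega>) - integral\<^sup>L P b)) + sqrt n * sqrt n * (2 * integral\<^sup>L P b)"
    by (simp add: sum.distrib sum_subtractf algebra_simps)
  finally have "\<bar>\<Sum>j=1..n. (f (Y j \<omega>) - integral\<^sup>L P f)\<bar> / sqrt n
      \<le> ((\<Sum>j=1..n. (b (Y j \<omega>) - integral\<^sup>L P b)) + sqrt n * sqrt n * (2 * integral\<^sup>L P b)) / sqrt n"
    by (intro divide_right_mono) simp_all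
  moreover have "real n * x / sqrt n = sqrt n * x" for x
    by (metis real_div_sqrt of_nat_0_le_iff times_divide_eq_left)
  ultimately show ?thesis
    using n unfolding emp_proc_def by (simp add: abs_mult add_divide_distrib)
qed

definition moment_const :: real where "moment_const = c\<^sup>2 * (4 + 16*c)"

lemma moment_const_nonneg: "0 \<le> moment_const"
  using c_ge_1 unfolding moment_const_def by simp

lemma emp_proc_fourth_moment_le:
  assumes f: "f \<in> borel_measurable borel" "\<And>z. \<bar>f z\<bar> \<le> 1" and \<sigma>: "0 < \<sigma>" "(\<integral>z. (f z)\<^sup>2 \<partial>P) \<le> \<sigma>"
  shows "(\<integral>\<^sup>+\<omega>. ennreal ((emp_proc P Y n f \<omega>)^4) \<partial>M) \<le> ennreal (moment_const * \<sigma>\<^sup>2)"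
proof -
  interpret prob_space M by (rule prob_M)
  have "(\<integral>\<^sup>+\<omega>. ennreal ((emp_proc P Y n f \<omega>)^4) \<partial>M) \<le> ennreal ((c*\<sigma>)\<^sup>2 * (4 + 16*c))"
    using f \<sigma> c_ge_1 by (intro fourth_moment_le_of_subgaussian_tail tail emp_proc_measurable) auto
  then show ?thesis by (simp add: moment_const_def power_mult_distrib mult_ac)
qed

definition max_fourth_bound :: "nat \<Rightarrow> nat \<Rightarrow> 'i set \<Rightarrow> ('i \<Rightarrow> 'a \<Rightarrow> real) \<Rightarrow> 'o \<Rightarrow> real" where
  "max_fourth_bound n k I f \<omega> = (1/2)^k + 8^k * (\<Sum>i\<in>I. (emp_proc P Y n (f i) \<omega>)^4)"

lemma abs_emp_proc_le_max_fourth_bound: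
  assumes "finite I" "i \<in> I"
  shows "\<bar>emp_proc P Y n (f i) \<omega>\<bar> \<le> max_fourth_bound n k I f \<omega>"
proof -
  have "((1/2::real)^k)^3 = 1 / 8^k" by (simp add: power_mult[symmetric] mult.commute[of k] power_mult power_divide)
  then show ?thesis
    using abs_le_add_sum_fourth_powers[OF assms, of "(1/2)^k" "\<lambda>i. emp_proc P Y n (f i) \<omega>"]
    by (simp add: max_fourth_bound_def mult.commute)
qed

lemma max_fourth_bound_nonneg: "0 \<le> max_fourth_bound n k I f \<omega>"
  unfolding max_fourth_bound_def by (simp add: sum_nonneg)

lemma max_fourth_bound_measurable:
  "(\<And>i. i \<in> I \<Longrightarrow> f i \<in> borel_measurable borel) \<Longrightarrow> max_fourth_bound n k I f \<in> borel_measurable M"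
  unfolding max_fourth_bound_def[abs_def] by (intro borel_measurable_add borel_measurable_times
      borel_measurable_const borel_measurable_sum borel_measurable_power emp_proc_measurable) auto

lemma nn_integral_max_fourth_bound_le:
  assumes I: "finite I" "card I \<le> 16^k + 1"
    and f: "\<And>i. f i \<in> borel_measurable borel" "\<And>i z. i \<in> I \<Longrightarrow> \<bar>f i z\<bar> \<le> 1"
    and s: "0 < s" "s \<le> 16" "\<And>i. i \<in> I \<Longrightarrow> (\<integral>z. (f i z)\<^sup>2 \<partial>P) \<le> s / 16^k"
  shows "(\<integral>\<^sup>+\<omega>. ennreal (max_fourth_bound n k I f \<omega>) \<partial>M) \<le> ennreal ((1/2)^k * (1 + 512 * moment_const))"
proof -
  interpret prob_space M by (rule prob_M)
  define S where "S \<omega> = (\<Sum>i\<in>I. (emp_proc P Y n (f i) \<omega>)^4)" for \<omega>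
  have S_measurable: "S \<in> borel_measurable M"
    unfolding S_def[abs_def] by (intro borel_measurable_sum borel_measurable_power emp_proc_measurable f(1))
  have "(\<integral>\<^sup>+\<omega>. ennreal (S \<omega>) \<partial>M) = (\<Sum>i\<in>I. \<integral>\<^sup>+\<omega>. ennreal ((emp_proc P Y n (f i) \<omega>)^4) \<partial>M)"
    unfolding S_def using emp_proc_measurable[OF f(1)]
    by (simp add: sum_ennreal[symmetric] del: sum_ennreal) (rule nn_integral_sum, auto)
  also have "\<dots> \<le> (\<Sum>i\<in>I. ennreal (moment_const * (s / 16^k)\<^sup>2))"
    using f s by (intro sum_mono emp_proc_fourth_moment_le) auto
  also have "\<dots> \<le> ennreal ((16^k + 1) * moment_const * (s / 16^k)\<^sup>2)"
  proof -
    have "real (card I) \<le> real (16^k + 1)" using I(2) by (simp only: of_nat_le_iff)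
    then have "real (card I) \<le> 16^k + 1" by simp
    then show ?thesis
      using mult_right_mono[of "real (card I)" "16^k + 1" "moment_const * (s / 16^k)\<^sup>2"] moment_const_nonneg
      by (simp add: ennreal_of_nat_eq_real_of_nat ennreal_mult[symmetric] ennreal_leI mult.assoc)
  qed
  finally have "(\<integral>\<^sup>+\<omega>. ennreal (max_fourth_bound n k I f \<omega>) \<partial>M)
      \<le> ennreal ((1/2)^k) + ennreal (8^k) * ennreal ((16^k + 1) * moment_const * (s / 16^k)\<^sup>2)"
    unfolding max_fourth_bound_def S_def[symmetric]
    using S_measurable[unfolded S_def[abs_def]] by (intro nn_integral_affine_le) (auto simp: S_def sum_nonneg)
  also have "\<dots> \<le> ennreal ((1/2)^k) + ennreal (512 * moment_const * (1/2)^k)"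
    using grid_fourth_moment_scaling[OF moment_const_nonneg, of s k] s moment_const_nonneg
    by (simp add: ennreal_mult[symmetric] ennreal_leI)
  also have "\<dots> = ennreal ((1/2)^k * (1 + 512 * moment_const))"
    using moment_const_nonneg by (simp add: ennreal_plus[symmetric] algebra_simps del: ennreal_plus)
  finally show ?thesis .
qed

end

locale truncated_weight_family = subgaussian_empirical_process P M Y c
  for P :: "'a::topological_space measure" and M :: "'o measure" and Y c +
  fixes w :: "'a \<Rightarrow> real" and w_max :: real
  assumes w_measurable[measurable]: "w \<in> borel_measurable borel"
    and w_nonneg: "\<And>x. 0 \<le> w x" and w_le_max: "\<And>x. w x \<le> w_max"
begin

definition trunc_weight :: "real \<Rightarrow> 'a \<Rightarrow> real" where
  "trunc_weight u z = min 1 (u * w z)"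

definition weight_support :: "'a \<Rightarrow> real" where
  "weight_support z = (if 0 < w z then 1 else 0)"

definition mean_trunc :: "real \<Rightarrow> real" where
  "mean_trunc u = (\<integral>z. trunc_weight u z \<partial>P)"

definition reachable :: "real \<Rightarrow> bool" where
  "reachable v \<longleftrightarrow> (\<exists>u\<ge>0. v \<le> mean_trunc u)"

definition mean_trunc_inv :: "real \<Rightarrow> real" where
  "mean_trunc_inv v = Inf {u. 0 \<le> u \<and> v \<le> mean_trunc u}"

lemma w_max_nonneg: "0 \<le> w_max"
  using w_nonneg w_le_max order_trans by blast

lemma trunc_weight_measurable[measurable]: "trunc_weight u \<in> borel_measurable borel"
  unfolding trunc_weight_def by measurable

lemma weight_support_measurable[measurable]: "weight_support \<in> borel_measurable borel"
  unfolding weight_support_def by measurable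

lemma trunc_weight_nonneg: "0 \<le> u \<Longrightarrow> 0 \<le> trunc_weight u z"
  unfolding trunc_weight_def using w_nonneg by simp

lemma trunc_weight_le_one: "trunc_weight u z \<le> 1"
  unfolding trunc_weight_def by simp

lemma abs_trunc_weight_le_one: "0 \<le> u \<Longrightarrow> \<bar>trunc_weight u z\<bar> \<le> 1"
  using trunc_weight_nonneg trunc_weight_le_one by (simp add: abs_le_iff)

lemma trunc_weight_mono: "0 \<le> u \<Longrightarrow> u \<le> u' \<Longrightarrow> trunc_weight u z \<le> trunc_weight u' z"
  unfolding trunc_weight_def using w_nonneg[of z] by (simp add: min.coboundedI2 mult_right_mono)

lemma trunc_weight_le_support: "0 \<le> u \<Longrightarrow> trunc_weight u z \<le> weight_support z"
  unfolding trunc_weight_def weight_support_def using w_nonneg[of z] by auto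

lemma integrable_trunc_weight: "integrable P (trunc_weight u)"
proof (rule integrable_P_of_bounded)
  fix z
  have "\<bar>u * w z\<bar> \<le> \<bar>u\<bar> * w_max"
    using w_nonneg[of z] w_le_max[of z] by (simp add: abs_mult mult_left_mono)
  then show "\<bar>trunc_weight u z\<bar> \<le> max 1 (\<bar>u\<bar> * w_max)"
    unfolding trunc_weight_def by (auto simp: abs_le_iff min_def max_def)
qed simp

lemma integrable_weight_support: "integrable P weight_support"
  by (rule integrable_P_of_bounded[of _ 1]) (simp_all add: weight_support_def)

lemma integral_trunc_weight_diff:
  "(\<integral>z. trunc_weight a z - trunc_weight b z \<partial>P) = mean_trunc a - mean_trunc b"
  unfolding mean_trunc_def using integrable_trunc_weight by simp

lemma mean_trunc_zero: "mean_trunc 0 = 0"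
  by (simp add: mean_trunc_def trunc_weight_def)

lemma mean_trunc_nonneg: "0 \<le> u \<Longrightarrow> 0 \<le> mean_trunc u"
  unfolding mean_trunc_def by (intro integral_nonneg_AE) (simp add: trunc_weight_nonneg)

lemma mean_trunc_mono: "0 \<le> u \<Longrightarrow> u \<le> u' \<Longrightarrow> mean_trunc u \<le> mean_trunc u'"
  unfolding mean_trunc_def by (intro integral_mono integrable_trunc_weight trunc_weight_mono)

lemma mean_trunc_le_one: "mean_trunc u \<le> 1"
proof -
  interpret prob_space P by (rule prob_P)
  have "mean_trunc u \<le> (\<integral>z. 1 \<partial>P)"
    unfolding mean_trunc_def by (intro integral_mono integrable_trunc_weight) (simp_all add: trunc_weight_le_one)
  then show ?thesis by (simp add: prob_space)
qed

lemma mean_trunc_lipschitz: "\<bar>mean_trunc u - mean_trunc u'\<bar> \<le> w_max * \<bar>u - u'\<bar>"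
proof -
  interpret prob_space P by (rule prob_P)
  have pointwise: "\<bar>trunc_weight u z - trunc_weight u' z\<bar> \<le> w_max * \<bar>u - u'\<bar>" for z
  proof -
    have "\<bar>trunc_weight u z - trunc_weight u' z\<bar> \<le> \<bar>u * w z - u' * w z\<bar>"
      unfolding trunc_weight_def by linarith
    also have "\<dots> = \<bar>u - u'\<bar> * w z"
      using w_nonneg[of z] by (simp add: abs_mult left_diff_distrib[symmetric])
    also have "\<dots> \<le> \<bar>u - u'\<bar> * w_max" by (intro mult_left_mono w_le_max) simp
    finally show ?thesis by (simp add: mult.commute)
  qed
  have "\<bar>mean_trunc u - mean_trunc u'\<bar> \<le> (\<integral>z. \<bar>trunc_weight u z - trunc_weight u' z\<bar> \<partial>P)"
    unfolding integral_trunc_weight_diff[symmetric] by (rule integral_abs_bound)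
  also have "\<dots> \<le> (\<integral>z. w_max * \<bar>u - u'\<bar> \<partial>P)"
    using pointwise integrable_trunc_weight by (intro integral_mono) auto
  finally show ?thesis by (simp add: prob_space)
qed

lemma continuous_mean_trunc: "continuous_on A mean_trunc"
  using mean_trunc_lipschitz w_max_nonneg
  by (intro lipschitz_on_continuous_on[of w_max] lipschitz_onI) (simp_all add: dist_real_def)

lemma mean_trunc_inv_le: "0 \<le> u \<Longrightarrow> v \<le> mean_trunc u \<Longrightarrow> mean_trunc_inv v \<le> u"
  unfolding mean_trunc_inv_def by (rule cInf_lower) (auto intro: bdd_belowI[of _ 0])

lemma mean_trunc_inv_nonneg: "reachable v \<Longrightarrow> 0 \<le> mean_trunc_inv v"
  unfolding mean_trunc_inv_def reachable_def by (rule cInf_greatest) auto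

text \<open>The infimum defining the inverse is attained since \<open>mean_trunc\<close> is continuous; it is
  then an exact preimage by the intermediate value theorem on \<open>[0, mean_trunc_inv v]\<close>.\<close>
lemma mean_trunc_mean_trunc_inv:
  assumes v: "0 \<le> v" "reachable v"
  shows "mean_trunc (mean_trunc_inv v) = v"
proof -
  define S where "S = {u. 0 \<le> u \<and> v \<le> mean_trunc u}"
  have "S \<noteq> {}" using v(2) by (auto simp: S_def reachable_def)
  moreover have "bdd_below S" by (auto simp: S_def intro: bdd_belowI[of _ 0])
  moreover have "closed S"
    unfolding S_def using continuous_mean_trunc
    by (intro closed_Collect_conj closed_Collect_le) (simp_all add: continuous_on_const continuous_on_id)
  ultimately have "mean_trunc_inv v \<in> S"
    unfolding mean_trunc_inv_def S_def[symmetric] by (rule closed_contains_Inf)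
  then obtain u where u: "0 \<le> u" "u \<le> mean_trunc_inv v" "mean_trunc u = v"
    using IVT'[of mean_trunc 0 v "mean_trunc_inv v"] v(1) continuous_mean_trunc
    by (auto simp: S_def mean_trunc_zero)
  then have "mean_trunc_inv v \<le> u" by (intro mean_trunc_inv_le) simp_all
  with u show ?thesis by simp
qed

lemma reachable_le: "reachable v' \<Longrightarrow> v \<le> v' \<Longrightarrow> reachable v"
  unfolding reachable_def by (meson order_trans)

lemma mean_trunc_inv_mono:
  assumes "0 \<le> v" "v \<le> v'" "reachable v'"
  shows "mean_trunc_inv v \<le> mean_trunc_inv v'"
  using assms by (intro mean_trunc_inv_le mean_trunc_inv_nonneg) (simp_all add: mean_trunc_mean_trunc_inv)

lemma trunc_weight_tendsto_support: "(\<lambda>i. trunc_weight (real i) z) \<longlonglongrightarrow> weight_support z"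
proof (cases "0 < w z")
  case False
  then show ?thesis using w_nonneg[of z] by (simp add: trunc_weight_def weight_support_def)
next
  case True
  obtain N :: nat where N: "1 / w z < real N" using reals_Archimedean2 by blast
  have "trunc_weight (real i) z = 1" if "N \<le> i" for i
  proof -
    have "1 / w z < real i" using N that by (meson of_nat_le_iff order_less_le_trans)
    then show ?thesis using True by (simp add: trunc_weight_def field_simps)
  qed
  then have "(\<lambda>i. trunc_weight (real i) z) \<longlonglongrightarrow> 1"
    by (intro tendsto_eventually eventually_sequentiallyI)
  then show ?thesis using True by (simp add: weight_support_def)
qed

text \<open>Values above \<open>sup\<^sub>u mean_trunc u = \<pi>\<^sub>Y(w > 0)\<close> are not reachable; the top bracket then
  closes with \<open>weight_support\<close>.\<close>
lemma integral_weight_support_le_of_not_reachable: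
  assumes "\<not> reachable v"
  shows "integral\<^sup>L P weight_support \<le> v"
proof -
  interpret prob_space P by (rule prob_P)
  have "(\<lambda>i. mean_trunc (real i)) \<longlonglongrightarrow> integral\<^sup>L P weight_support"
    unfolding mean_trunc_def
    using trunc_weight_tendsto_support abs_trunc_weight_le_one
    by (intro integral_dominated_convergence[where w="\<lambda>_. 1"]) (simp_all add: measurable_cong_sets[OF sets_P refl])
  moreover have "mean_trunc (real i) < v" for i
    using assms unfolding reachable_def by (meson not_le of_nat_0_le_iff)
  ultimately show ?thesis by (intro LIMSEQ_le_const2) (auto intro: less_imp_le)
qed

end

context truncated_weight_family
begin

definition grid :: "nat \<Rightarrow> nat set" where
  "grid k = {i. i \<le> 16^k \<and> reachable (real i / 16^k)}"

abbreviation grid_point :: "nat \<Rightarrow> nat \<Rightarrow> real" where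
  "grid_point k i \<equiv> mean_trunc_inv (real i / 16^k)"

definition grid_index :: "nat \<Rightarrow> real \<Rightarrow> nat" where
  "grid_index k u = nat \<lfloor>mean_trunc u * 16^k\<rfloor>"

lemma finite_grid: "finite (grid k)"
  unfolding grid_def by simp

lemma card_grid_le: "card (grid k) \<le> 16^k + 1"
proof -
  have "card (grid k) \<le> card {..(16::nat)^k}" by (rule card_mono) (auto simp: grid_def)
  then show ?thesis by simp
qed

lemma grid_nonneg: "i \<in> grid k \<Longrightarrow> 0 \<le> grid_point k i"
  unfolding grid_def by (simp add: mean_trunc_inv_nonneg)

lemma mean_trunc_grid_point: "i \<in> grid k \<Longrightarrow> mean_trunc (grid_point k i) = real i / 16^k"
  unfolding grid_def by (simp add: mean_trunc_mean_trunc_inv)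

lemma parent_le: "real (i div 16) / 16^k \<le> real i / 16^Suc k"
proof -
  have "real (i div 16) * 16 \<le> real i"
    by (metis div_times_less_eq_dividend of_nat_le_iff of_nat_mult of_nat_numeral)
  then show ?thesis by (simp add: field_simps)
qed

lemma parent_in_grid:
  assumes "i \<in> grid (Suc k)"
  shows "i div 16 \<in> grid k"
proof -
  have "i div 16 \<le> 16^Suc k div 16" using assms by (intro div_le_mono) (simp add: grid_def)
  moreover have "reachable (real i / 16^Suc k)" using assms by (simp add: grid_def)
  then have "reachable (real (i div 16) / 16^k)" using parent_le by (rule reachable_le)
  ultimately show ?thesis by (simp add: grid_def)
qed

lemma grid_point_parent_le: "i \<in> grid (Suc k) \<Longrightarrow> grid_point k (i div 16) \<le> grid_point (Suc k) i"
  using parent_le[of i k] by (intro mean_trunc_inv_mono) (simp_all add: grid_def)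

lemma real_grid_index: "0 \<le> u \<Longrightarrow> real (grid_index k u) = of_int \<lfloor>mean_trunc u * 16^k\<rfloor>"
  using mean_trunc_nonneg[of u] by (simp add: grid_index_def)

lemma grid_index_le_mean_trunc: "0 \<le> u \<Longrightarrow> real (grid_index k u) / 16^k \<le> mean_trunc u"
  by (simp add: real_grid_index divide_le_eq)

lemma mean_trunc_less_grid_index: "0 \<le> u \<Longrightarrow> mean_trunc u < (real (grid_index k u) + 1) / 16^k"
  by (simp add: real_grid_index less_divide_eq)

lemma grid_index_in_grid:
  assumes u: "0 \<le> u"
  shows "grid_index k u \<in> grid k"
proof -
  have "real (grid_index k u) \<le> mean_trunc u * 16^k"
    using grid_index_le_mean_trunc[OF u, of k] by (simp add: divide_le_eq)
  also have "\<dots> \<le> 16^k" using mean_trunc_le_one[of u] by simp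
  finally have "real (grid_index k u) \<le> real ((16::nat)^k)" by simp
  then have "grid_index k u \<le> 16^k" by (simp only: of_nat_le_iff)
  then show ?thesis
    using grid_index_le_mean_trunc[OF u] u by (auto simp: grid_def reachable_def)
qed

lemma grid_index_Suc_div: "0 \<le> u \<Longrightarrow> grid_index (Suc k) u div 16 = grid_index k u"
proof -
  assume u: "0 \<le> u"
  have "\<lfloor>mean_trunc u * 16^(Suc k) / real_of_int 16\<rfloor> = \<lfloor>mean_trunc u * 16^(Suc k)\<rfloor> div 16"
    by (rule floor_divide_real_eq_div) simp
  then show ?thesis using mean_trunc_nonneg[OF u] by (simp add: grid_index_def nat_div_distrib)
qed

definition scaled_trunc :: "('a \<Rightarrow> real) \<Rightarrow> real \<Rightarrow> 'a \<Rightarrow> real" where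
  "scaled_trunc \<psi> u z = \<psi> z * trunc_weight u z"

definition chain_link :: "('a \<Rightarrow> real) \<Rightarrow> nat \<Rightarrow> nat \<Rightarrow> 'a \<Rightarrow> real" where
  "chain_link \<psi> k i z = scaled_trunc \<psi> (grid_point k i) z
     - (if k = 0 then 0 else scaled_trunc \<psi> (grid_point (k - 1) (i div 16)) z)"

definition bracket :: "nat \<Rightarrow> nat \<Rightarrow> 'a \<Rightarrow> real" where
  "bracket K j z =
     (if reachable ((real j + 1) / 16^K) then trunc_weight (mean_trunc_inv ((real j + 1) / 16^K)) z
      else weight_support z) - trunc_weight (grid_point K j) z"

lemma scaled_trunc_measurable:
  "\<psi> \<in> borel_measurable borel \<Longrightarrow> scaled_trunc \<psi> u \<in> borel_measurable borel"
  unfolding scaled_trunc_def[abs_def] by (intro borel_measurable_times trunc_weight_measurable)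

lemma abs_scaled_trunc_le_one: "(\<And>z. \<bar>\<psi> z\<bar> \<le> 1) \<Longrightarrow> 0 \<le> u \<Longrightarrow> \<bar>scaled_trunc \<psi> u z\<bar> \<le> 1"
  unfolding scaled_trunc_def using abs_trunc_weight_le_one[of u z] by (simp add: abs_mult mult_le_one)

lemma abs_scaled_trunc_diff_le:
  assumes \<psi>: "\<And>z. \<bar>\<psi> z\<bar> \<le> 1" and u: "0 \<le> u" "u \<le> u'"
  shows "\<bar>scaled_trunc \<psi> u' z - scaled_trunc \<psi> u z\<bar> \<le> trunc_weight u' z - trunc_weight u z"
proof -
  have "\<bar>scaled_trunc \<psi> u' z - scaled_trunc \<psi> u z\<bar> = \<bar>\<psi> z\<bar> * \<bar>trunc_weight u' z - trunc_weight u z\<bar>"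
    unfolding scaled_trunc_def by (simp add: abs_mult[symmetric] right_diff_distrib)
  also have "\<dots> \<le> \<bar>trunc_weight u' z - trunc_weight u z\<bar>" using \<psi>[of z] by (simp add: mult_left_le_one_le)
  finally show ?thesis using trunc_weight_mono[OF u] by simp
qed

lemma chain_link_measurable:
  "\<psi> \<in> borel_measurable borel \<Longrightarrow> chain_link \<psi> k i \<in> borel_measurable borel"
  unfolding chain_link_def[abs_def]
  by (cases "k = 0") (auto intro!: borel_measurable_diff scaled_trunc_measurable)

lemma bracket_measurable: "bracket K j \<in> borel_measurable borel"
  unfolding bracket_def[abs_def]
  by (cases "reachable ((real j + 1) / 16^K)") (auto intro!: borel_measurable_diff)

lemma abs_chain_link_Suc_le:
  assumes \<psi>: "\<And>z. \<bar>\<psi> z\<bar> \<le> 1" and i: "i \<in> grid (Suc k)"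
  shows "\<bar>chain_link \<psi> (Suc k) i z\<bar> \<le> trunc_weight (grid_point (Suc k) i) z - trunc_weight (grid_point k (i div 16)) z"
  using abs_scaled_trunc_diff_le[OF \<psi> grid_nonneg[OF parent_in_grid[OF i]] grid_point_parent_le[OF i]]
  by (simp add: chain_link_def)

lemma abs_chain_link_le_one:
  assumes \<psi>: "\<And>z. \<bar>\<psi> z\<bar> \<le> 1" and i: "i \<in> grid k"
  shows "\<bar>chain_link \<psi> k i z\<bar> \<le> 1"
proof (cases k)
  case 0
  then show ?thesis using abs_scaled_trunc_le_one[OF \<psi> grid_nonneg[OF i]] by (simp add: chain_link_def)
next
  case (Suc k')
  with i have i': "i \<in> grid (Suc k')" by simp
  have "0 \<le> trunc_weight (grid_point k' (i div 16)) z"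
    by (rule trunc_weight_nonneg[OF grid_nonneg[OF parent_in_grid[OF i']]])
  then show ?thesis
    using abs_chain_link_Suc_le[of \<psi> i k' z, OF \<psi> i'] trunc_weight_le_one[of "grid_point (Suc k') i" z] Suc
    by simp
qed

lemma chain_link_second_moment_le:
  assumes \<psi>: "\<psi> \<in> borel_measurable borel" "\<And>z. \<bar>\<psi> z\<bar> \<le> 1" and i: "i \<in> grid k"
  shows "(\<integral>z. (chain_link \<psi> k i z)\<^sup>2 \<partial>P) \<le> 16 / 16^k"
proof -
  interpret prob_space P by (rule prob_P)
  have link_le: "\<bar>chain_link \<psi> k i z\<bar> \<le> 1" for z by (rule abs_chain_link_le_one[OF \<psi>(2) i])
  have sq_le: "(chain_link \<psi> k i z)\<^sup>2 \<le> \<bar>chain_link \<psi> k i z\<bar>" for z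
    by (rule power2_le_abs_of_abs_le_one[OF link_le])
  have integrable: "integrable P (\<lambda>z. (chain_link \<psi> k i z)\<^sup>2)"
  proof (rule integrable_P_of_bounded[of _ 1])
    show "(\<lambda>z. (chain_link \<psi> k i z)\<^sup>2) \<in> borel_measurable borel"
      by (intro borel_measurable_power chain_link_measurable \<psi>(1))
    show "\<bar>(chain_link \<psi> k i z)\<^sup>2\<bar> \<le> 1" for z using sq_le[of z] link_le[of z] by simp
  qed
  show ?thesis
  proof (cases k)
    case 0
    have "(\<integral>z. (chain_link \<psi> k i z)\<^sup>2 \<partial>P) \<le> (\<integral>z. 1 \<partial>P)"
      using order_trans[OF sq_le link_le] by (intro integral_mono integrable) simp_all
    then show ?thesis using 0 by (simp add: prob_space)
  next
    case (Suc k')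
    let ?d = "\<lambda>z. trunc_weight (grid_point (Suc k') i) z - trunc_weight (grid_point k' (i div 16)) z"
    have "(chain_link \<psi> k i z)\<^sup>2 \<le> ?d z" for z
      using sq_le[of z] abs_chain_link_Suc_le[of \<psi> i k' z, OF \<psi>(2)] i Suc by simp
    then have "(\<integral>z. (chain_link \<psi> k i z)\<^sup>2 \<partial>P) \<le> (\<integral>z. ?d z \<partial>P)"
      using integrable_trunc_weight by (intro integral_mono integrable) simp_all
    also have "\<dots> = real i / 16^Suc k' - real (i div 16) / 16^k'"
      using Suc i mean_trunc_grid_point[of i "Suc k'"] mean_trunc_grid_point[OF parent_in_grid, of i k']
      by (simp add: integral_trunc_weight_diff)
    also have "\<dots> \<le> 16 / 16^k"
    proof -
      have "real i \<le> 16 * real (i div 16) + 16" by linarith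
      then have "real i * 16^k' \<le> (16 * real (i div 16) + 16) * 16^k'" by (rule mult_right_mono) simp
      then show ?thesis unfolding Suc by (simp add: field_simps)
    qed
    finally show ?thesis .
  qed
qed

lemma bracket_bounds:
  assumes j: "j \<in> grid K"
  shows "0 \<le> bracket K j z" "bracket K j z \<le> 1" "(\<integral>z. bracket K j z \<partial>P) \<le> 1 / 16^K"
proof -
  define v where "v = real j / 16^K"
  define v' where "v' = (real j + 1) / 16^K"
  have q0: "0 \<le> grid_point K j" and mean_v: "mean_trunc (grid_point K j) = v"
    using grid_nonneg[OF j] mean_trunc_grid_point[OF j] by (simp_all add: v_def)
  have gap: "v' - v = 1 / 16^K" by (simp add: v_def v'_def field_simps)
  have "0 \<le> bracket K j z \<and> bracket K j z \<le> 1 \<and> (\<integral>z. bracket K j z \<partial>P) \<le> 1 / 16^K"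
  proof (cases "reachable v'")
    case True
    have mono: "grid_point K j \<le> mean_trunc_inv v'"
      using True by (intro mean_trunc_inv_mono) (simp_all add: v'_def divide_right_mono)
    have eq: "bracket K j = (\<lambda>z. trunc_weight (mean_trunc_inv v') z - trunc_weight (grid_point K j) z)"
      using True by (simp add: bracket_def v'_def fun_eq_iff)
    have "mean_trunc (mean_trunc_inv v') = v'"
      using True by (intro mean_trunc_mean_trunc_inv) (simp_all add: v'_def)
    then show ?thesis
      unfolding eq integral_trunc_weight_diff mean_v
      using gap trunc_weight_mono[OF q0 mono, of z] trunc_weight_le_one[of "mean_trunc_inv v'" z]
        trunc_weight_nonneg[OF q0, of z] by simp
  next
    case False
    have eq: "bracket K j = (\<lambda>z. weight_support z - trunc_weight (grid_point K j) z)"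
      using False by (simp add: bracket_def v'_def fun_eq_iff)
    have "(\<integral>z. bracket K j z \<partial>P) = integral\<^sup>L P weight_support - v"
      unfolding eq using integrable_weight_support integrable_trunc_weight mean_v by (simp add: mean_trunc_def)
    also have "\<dots> \<le> 1 / 16^K"
      using integral_weight_support_le_of_not_reachable[OF False] gap by simp
    finally show ?thesis
      unfolding eq using trunc_weight_le_support[OF q0, of z] trunc_weight_nonneg[OF q0, of z]
      by (simp add: weight_support_def)
  qed
  then show "0 \<le> bracket K j z" "bracket K j z \<le> 1" "(\<integral>z. bracket K j z \<partial>P) \<le> 1 / 16^K"
    by auto
qed

lemma bracket_second_moment_le:
  assumes j: "j \<in> grid K"
  shows "(\<integral>z. (bracket K j z)\<^sup>2 \<partial>P) \<le> 1 / 16^K"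
proof -
  have abs_le: "\<bar>bracket K j z\<bar> \<le> 1" for z using bracket_bounds(1,2)[OF j, of z] by simp
  have "(\<integral>z. (bracket K j z)\<^sup>2 \<partial>P) \<le> (\<integral>z. bracket K j z \<partial>P)"
  proof (rule integral_mono)
    show "integrable P (\<lambda>z. (bracket K j z)\<^sup>2)"
      using abs_le by (intro integrable_P_of_bounded[of _ 1] borel_measurable_power bracket_measurable)
        (simp add: abs_square_le_1)
    show "integrable P (bracket K j)" using abs_le by (intro integrable_P_of_bounded bracket_measurable)
    show "(bracket K j z)\<^sup>2 \<le> bracket K j z" for z
      using power2_le_abs_of_abs_le_one[OF abs_le[of z]] bracket_bounds(1)[OF j, of z] by simp
  qed
  then show ?thesis using bracket_bounds(3)[OF j] by linarith
qed

lemma emp_proc_telescope: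
  assumes \<psi>: "\<psi> \<in> borel_measurable borel" "\<And>z. \<bar>\<psi> z\<bar> \<le> 1" and u: "0 \<le> u"
  shows "emp_proc P Y n (scaled_trunc \<psi> (grid_point K (grid_index K u))) \<omega>
           = (\<Sum>k\<le>K. emp_proc P Y n (chain_link \<psi> k (grid_index k u)) \<omega>)"
proof (induction K)
  case 0
  then show ?case by (simp add: chain_link_def[abs_def])
next
  case (Suc K)
  have eq: "chain_link \<psi> (Suc K) (grid_index (Suc K) u)
      = (\<lambda>z. scaled_trunc \<psi> (grid_point (Suc K) (grid_index (Suc K) u)) z
             - scaled_trunc \<psi> (grid_point K (grid_index K u)) z)"
    by (simp add: chain_link_def grid_index_Suc_div[OF u] fun_eq_iff)
  have "emp_proc P Y n (chain_link \<psi> (Suc K) (grid_index (Suc K) u)) \<omega>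
      = emp_proc P Y n (scaled_trunc \<psi> (grid_point (Suc K) (grid_index (Suc K) u))) \<omega>
        - emp_proc P Y n (scaled_trunc \<psi> (grid_point K (grid_index K u))) \<omega>"
    unfolding eq using \<psi> grid_nonneg[OF grid_index_in_grid[OF u]]
    by (intro emp_proc_diff[where Bf=1 and Bg=1] scaled_trunc_measurable abs_scaled_trunc_le_one)
  then show ?case using Suc by simp
qed

lemma abs_scaled_trunc_sub_grid_le_bracket:
  assumes \<psi>: "\<And>z. \<bar>\<psi> z\<bar> \<le> 1" and u: "0 \<le> u"
  shows "\<bar>scaled_trunc \<psi> u z - scaled_trunc \<psi> (grid_point K (grid_index K u)) z\<bar> \<le> bracket K (grid_index K u) z"
proof -
  define j where "j = grid_index K u"
  define v' where "v' = (real j + 1) / 16^K"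
  have j: "j \<in> grid K" using grid_index_in_grid[OF u] by (simp add: j_def)
  have below: "grid_point K j \<le> u"
    using grid_index_le_mean_trunc[OF u] by (intro mean_trunc_inv_le u) (simp add: j_def)
  have "\<bar>scaled_trunc \<psi> u z - scaled_trunc \<psi> (grid_point K j) z\<bar> \<le> trunc_weight u z - trunc_weight (grid_point K j) z"
    by (rule abs_scaled_trunc_diff_le[OF \<psi> grid_nonneg[OF j] below])
  also have "\<dots> \<le> bracket K j z"
  proof (cases "reachable v'")
    case True
    have "u \<le> mean_trunc_inv v'"
    proof (rule ccontr)
      assume "\<not> u \<le> mean_trunc_inv v'"
      then have "mean_trunc (mean_trunc_inv v') \<le> mean_trunc u"
        using True by (intro mean_trunc_mono mean_trunc_inv_nonneg) simp_all
      then show False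
        using True mean_trunc_less_grid_index[OF u, of K]
        by (simp add: mean_trunc_mean_trunc_inv v'_def j_def)
    qed
    then show ?thesis using True trunc_weight_mono[OF u] by (simp add: bracket_def v'_def)
  next
    case False
    then show ?thesis using trunc_weight_le_support[OF u] by (simp add: bracket_def v'_def)
  qed
  finally show ?thesis by (simp add: j_def)
qed

text \<open>Pathwise majorant of \<open>sup\<^sub>u |G\<^sub>n(\<psi> \<cdot> trunc_weight u)|\<close>: the chain down to level \<open>K\<close>
  plus the last bracket, whose mean costs \<open>2\<surd>n 16\<^sup>-\<^sup>K\<close>.\<close>
definition chain_bound :: "nat \<Rightarrow> ('a \<Rightarrow> real) \<Rightarrow> nat \<Rightarrow> 'o \<Rightarrow> real" where
  "chain_bound n \<psi> K \<omega> = (\<Sum>k\<le>K. max_fourth_bound n k (grid k) (chain_link \<psi> k) \<omega>)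
     + max_fourth_bound n K (grid K) (bracket K) \<omega> + 2 * sqrt n / 16^K"

lemma chain_bound_nonneg: "0 \<le> chain_bound n \<psi> K \<omega>"
  unfolding chain_bound_def by (intro add_nonneg_nonneg sum_nonneg max_fourth_bound_nonneg) simp_all

lemma chain_bound_measurable:
  "\<psi> \<in> borel_measurable borel \<Longrightarrow> chain_bound n \<psi> K \<in> borel_measurable M"
  unfolding chain_bound_def[abs_def]
  by (intro borel_measurable_add borel_measurable_sum borel_measurable_const max_fourth_bound_measurable
      chain_link_measurable bracket_measurable)

lemma abs_emp_proc_scaled_trunc_le_chain_bound:
  assumes n: "0 < n" and \<psi>: "\<psi> \<in> borel_measurable borel" "\<And>z. \<bar>\<psi> z\<bar> \<le> 1" and u: "0 \<le> u"
  shows "\<bar>emp_proc P Y n (scaled_trunc \<psi> u) \<omega>\<bar> \<le> chain_bound n \<psi> K \<omega>"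
proof -
  define p where "p = grid_point K (grid_index K u)"
  have j: "grid_index K u \<in> grid K" by (rule grid_index_in_grid[OF u])
  have p: "0 \<le> p" using grid_nonneg[OF j] by (simp add: p_def)
  have split: "emp_proc P Y n (scaled_trunc \<psi> u) \<omega>
      = emp_proc P Y n (\<lambda>z. scaled_trunc \<psi> u z - scaled_trunc \<psi> p z) \<omega> + emp_proc P Y n (scaled_trunc \<psi> p) \<omega>"
    using \<psi> p u
    by (simp add: emp_proc_diff[where Bf=1 and Bg=1, OF scaled_trunc_measurable _ scaled_trunc_measurable]
        abs_scaled_trunc_le_one)
  have chain: "\<bar>emp_proc P Y n (scaled_trunc \<psi> p) \<omega>\<bar> \<le> (\<Sum>k\<le>K. max_fourth_bound n k (grid k) (chain_link \<psi> k) \<omega>)"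
    unfolding p_def emp_proc_telescope[OF \<psi> u]
    using u by (intro order_trans[OF sum_abs] sum_mono abs_emp_proc_le_max_fourth_bound finite_grid grid_index_in_grid)
  have "\<bar>emp_proc P Y n (\<lambda>z. scaled_trunc \<psi> u z - scaled_trunc \<psi> p z) \<omega>\<bar>
      \<le> emp_proc P Y n (bracket K (grid_index K u)) \<omega> + 2 * sqrt n * integral\<^sup>L P (bracket K (grid_index K u))"
  proof (rule abs_emp_proc_le_of_dominated[OF n, where Bf=2 and Bg=1])
    show "(\<lambda>z. scaled_trunc \<psi> u z - scaled_trunc \<psi> p z) \<in> borel_measurable borel"
      using \<psi>(1) by (intro borel_measurable_diff scaled_trunc_measurable)
    show "\<bar>scaled_trunc \<psi> u z - scaled_trunc \<psi> p z\<bar> \<le> 2" for z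
      using abs_scaled_trunc_le_one[of \<psi> u z, OF \<psi>(2) u] abs_scaled_trunc_le_one[of \<psi> p z, OF \<psi>(2) p]
      by linarith
    show "\<bar>bracket K (grid_index K u) z\<bar> \<le> 1" for z using bracket_bounds(1,2)[OF j, of z] by simp
    show "\<bar>scaled_trunc \<psi> u z - scaled_trunc \<psi> p z\<bar> \<le> bracket K (grid_index K u) z" for z
      unfolding p_def by (rule abs_scaled_trunc_sub_grid_le_bracket[OF \<psi>(2) u])
  qed (rule bracket_measurable)
  also have "\<dots> \<le> max_fourth_bound n K (grid K) (bracket K) \<omega> + 2 * sqrt n / 16^K"
    using abs_emp_proc_le_max_fourth_bound[OF finite_grid j, of n "bracket K" \<omega> K]
      mult_left_mono[OF bracket_bounds(3)[OF j], of "2 * sqrt n"] by simp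
  finally show ?thesis using chain unfolding split chain_bound_def by linarith
qed

lemma nn_integral_chain_bound_le:
  assumes \<psi>: "\<psi> \<in> borel_measurable borel" "\<And>z. \<bar>\<psi> z\<bar> \<le> 1"
  shows "(\<integral>\<^sup>+\<omega>. ennreal (chain_bound n \<psi> K \<omega>) \<partial>M)
           \<le> ennreal (3 * (1 + 512 * moment_const) + 2 * sqrt n / 16^K)"
proof -
  interpret prob_space M by (rule prob_M)
  define L where "L = 1 + 512 * moment_const"
  have L: "0 \<le> L" using moment_const_nonneg by (simp add: L_def)
  have links: "(\<integral>\<^sup>+\<omega>. ennreal (max_fourth_bound n k (grid k) (chain_link \<psi> k) \<omega>) \<partial>M) \<le> ennreal ((1/2)^k * L)" for k
    unfolding L_def using chain_link_measurable[OF \<psi>(1)] chain_link_second_moment_le[OF \<psi>]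
      abs_chain_link_le_one[of \<psi>, OF \<psi>(2)]
    by (intro nn_integral_max_fourth_bound_le finite_grid card_grid_le) auto
  have "(\<integral>\<^sup>+\<omega>. ennreal (max_fourth_bound n K (grid K) (bracket K) \<omega>) \<partial>M) \<le> ennreal ((1/2)^K * L)"
    unfolding L_def using bracket_measurable bracket_second_moment_le bracket_bounds(1,2)
    by (intro nn_integral_max_fourth_bound_le[where s=1] finite_grid card_grid_le) (auto simp: abs_le_iff)
  also have "\<dots> \<le> ennreal L" using L by (intro ennreal_leI mult_left_le_one_le) (simp_all add: power_le_one)
  finally have last: "(\<integral>\<^sup>+\<omega>. ennreal (max_fourth_bound n K (grid K) (bracket K) \<omega>) \<partial>M) \<le> ennreal L" .
  have "(\<integral>\<^sup>+\<omega>. ennreal (chain_bound n \<psi> K \<omega>) \<partial>M)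
      = (\<Sum>k\<le>K. \<integral>\<^sup>+\<omega>. ennreal (max_fourth_bound n k (grid k) (chain_link \<psi> k) \<omega>) \<partial>M)
        + (\<integral>\<^sup>+\<omega>. ennreal (max_fourth_bound n K (grid K) (bracket K) \<omega>) \<partial>M) + ennreal (2 * sqrt n / 16^K)"
  proof -
    have measurable: "max_fourth_bound n k (grid k) (chain_link \<psi> k) \<in> borel_measurable M"
      "max_fourth_bound n K (grid K) (bracket K) \<in> borel_measurable M" for k
      by (intro max_fourth_bound_measurable chain_link_measurable bracket_measurable \<psi>(1))+
    then show ?thesis
      unfolding chain_bound_def
      by (simp add: ennreal_plus sum_nonneg max_fourth_bound_nonneg nn_integral_add nn_integral_sum
          sum_ennreal[symmetric] emeasure_space_1 add_nonneg_nonneg del: sum_ennreal)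
  qed
  also have "\<dots> \<le> ennreal (2 * L) + ennreal L + ennreal (2 * sqrt n / 16^K)"
  proof (intro add_mono order_refl last)
    have "(\<Sum>k\<le>K. \<integral>\<^sup>+\<omega>. ennreal (max_fourth_bound n k (grid k) (chain_link \<psi> k) \<omega>) \<partial>M)
        \<le> (\<Sum>k\<le>K. ennreal ((1/2)^k * L))"
      by (intro sum_mono links)
    also have "\<dots> = ennreal ((\<Sum>k\<le>K. (1/2)^k) * L)"
      using L by (simp add: sum_ennreal sum_distrib_right)
    also have "\<dots> \<le> ennreal (2 * L)"
      using L sum_power_half_le_two[of K] by (intro ennreal_leI mult_right_mono)
    finally show "(\<Sum>k\<le>K. \<integral>\<^sup>+\<omega>. ennreal (max_fourth_bound n k (grid k) (chain_link \<psi> k) \<omega>) \<partial>M)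
        \<le> ennreal (2 * L)" .
  qed
  also have "\<dots> = ennreal (3 * (1 + 512 * moment_const) + 2 * sqrt n / 16^K)"
    using L by (simp add: L_def ennreal_plus[symmetric] del: ennreal_plus)
  finally show ?thesis .
qed

end

lemma sqrt_le_sixteen_power: "sqrt (real n) \<le> 16^n"
proof -
  have "real n \<le> 2^n" using less_exp[of n] by simp
  also have "(2::real)^n \<le> 16^n" by (rule power_mono) auto
  also have "(16::real)^n \<le> (16^n)\<^sup>2" by (simp add: power2_eq_square)
  finally have "sqrt (real n) \<le> sqrt ((16^n)\<^sup>2)" by (rule real_sqrt_le_mono)
  then show ?thesis by simp
qed

context truncated_weight_family
begin

text \<open>With \<open>u = 1 / w x\<close> one has \<open>\<alpha>(x, \<cdot>) = trunc_weight u\<close>, also when \<open>w x = 0\<close> thanks to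
  the convention \<open>a / 0 = 0\<close>.\<close>
lemma H_g_eq_scaled_trunc:
  "H_g w g x = (\<lambda>z. 1 * scaled_trunc g (1 / w x) z + (- g x) * scaled_trunc (\<lambda>_. 1) (1 / w x) z)"
  by (simp add: fun_eq_iff H_g_def acc_alpha_def scaled_trunc_def trunc_weight_def algebra_simps)

lemma abs_emp_proc_H_g_le_chain_bound:
  assumes n: "0 < n" and g: "g \<in> borel_measurable borel" "\<And>z. \<bar>g z\<bar> \<le> 1"
  shows "\<bar>emp_proc P Y n (H_g w g x) \<omega>\<bar> \<le> chain_bound n g K \<omega> + chain_bound n (\<lambda>_. 1) K \<omega>"
proof -
  define u where "u = 1 / w x"
  have u: "0 \<le> u" using w_nonneg[of x] by (simp add: u_def)
  have one: "(\<lambda>_. 1::real) \<in> borel_measurable borel" "\<And>z::'a. \<bar>(\<lambda>_. 1::real) z\<bar> \<le> 1" by simp_all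
  have "emp_proc P Y n (H_g w g x) \<omega>
      = 1 * emp_proc P Y n (scaled_trunc g u) \<omega> + (- g x) * emp_proc P Y n (scaled_trunc (\<lambda>_. 1) u) \<omega>"
    unfolding H_g_eq_scaled_trunc u_def[symmetric]
    by (intro emp_proc_lincomb[where Bf=1 and Bg=1] scaled_trunc_measurable g(1) one(1)
        abs_scaled_trunc_le_one[of g u, OF g(2) u] abs_scaled_trunc_le_one[of "\<lambda>_. 1" u, OF one(2) u])
  then have "\<bar>emp_proc P Y n (H_g w g x) \<omega>\<bar>
      \<le> \<bar>emp_proc P Y n (scaled_trunc g u) \<omega>\<bar> + \<bar>g x\<bar> * \<bar>emp_proc P Y n (scaled_trunc (\<lambda>_. 1) u) \<omega>\<bar>"
    by (simp add: abs_mult[symmetric] abs_triangle_ineq)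
  also have "\<dots> \<le> \<bar>emp_proc P Y n (scaled_trunc g u) \<omega>\<bar> + \<bar>emp_proc P Y n (scaled_trunc (\<lambda>_. 1) u) \<omega>\<bar>"
    using mult_right_mono[OF g(2)[of x], of "\<bar>emp_proc P Y n (scaled_trunc (\<lambda>_. 1) u) \<omega>\<bar>"] by simp
  also have "\<dots> \<le> chain_bound n g K \<omega> + chain_bound n (\<lambda>_. 1) K \<omega>"
    by (intro add_mono abs_emp_proc_scaled_trunc_le_chain_bound n g one u)
  finally show ?thesis .
qed

lemma nn_integral_sup_emp_proc_H_g_le:
  assumes g: "g \<in> borel_measurable borel" "\<And>z. \<bar>g z\<bar> \<le> 1"
  shows "(\<integral>\<^sup>+\<omega>. (SUP x. ennreal \<bar>emp_proc P Y n (H_g w g x) \<omega>\<bar>) \<partial>M)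
           \<le> ennreal (6 * (1 + 512 * moment_const) + 4)"
proof (cases "n = 0")
  case True
  then show ?thesis by (simp add: emp_proc_def)
next
  case False
  then have n: "0 < n" by simp
  define L where "L = 3 * (1 + 512 * moment_const) + 2 * sqrt n / 16^n"
  have one: "(\<lambda>_. 1::real) \<in> borel_measurable borel" "\<And>z::'a. \<bar>(\<lambda>_. 1::real) z\<bar> \<le> 1" by simp_all
  have "(\<integral>\<^sup>+\<omega>. (SUP x. ennreal \<bar>emp_proc P Y n (H_g w g x) \<omega>\<bar>) \<partial>M)
      \<le> (\<integral>\<^sup>+\<omega>. ennreal (chain_bound n g n \<omega>) + ennreal (chain_bound n (\<lambda>_. 1) n \<omega>) \<partial>M)"
    using abs_emp_proc_H_g_le_chain_bound[OF n g] chain_bound_nonneg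
    by (intro nn_integral_mono SUP_least) (simp add: ennreal_plus[symmetric] ennreal_leI del: ennreal_plus)
  also have "\<dots> = (\<integral>\<^sup>+\<omega>. ennreal (chain_bound n g n \<omega>) \<partial>M) + (\<integral>\<^sup>+\<omega>. ennreal (chain_bound n (\<lambda>_. 1) n \<omega>) \<partial>M)"
    using chain_bound_measurable[OF g(1)] chain_bound_measurable[OF one(1)] by (intro nn_integral_add) auto
  also have "\<dots> \<le> ennreal L + ennreal L"
    unfolding L_def by (intro add_mono nn_integral_chain_bound_le g one)
  also have "\<dots> \<le> ennreal (6 * (1 + 512 * moment_const) + 4)"
  proof -
    have "2 * sqrt n / 16^n \<le> (2::real)" using sqrt_le_sixteen_power[of n] by (simp add: field_simps)
    then show ?thesis
      using moment_const_nonneg by (simp add: L_def ennreal_plus[symmetric] ennreal_leI del: ennreal_plus)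
  qed
  finally show ?thesis .
qed

end

theorem lemma2:
  fixes \<mu> :: "'a::polish_space measure"
    and p q :: "'a \<Rightarrow> real"
    and M :: "'o measure"
    and Y :: "nat \<Rightarrow> 'o \<Rightarrow> 'a"
    and y0 :: 'a
    and C :: real
    and g :: "'a \<Rightarrow> real"
  assumes sets_mu: "sets \<mu> = sets borel"
    and sf: "sigma_finite_measure \<mu>"
    and p_meas: "p \<in> borel_measurable borel" and p_nonneg: "\<And>x. p x \<ge> 0"
    and q_meas: "q \<in> borel_measurable borel" and q_nonneg: "\<And>x. q x \<ge> 0"
    and pi_prob: "prob_space (density \<mu> (\<lambda>x. ennreal (p x)))"
    and piY_prob: "prob_space (density \<mu> (\<lambda>x. ennreal (q x)))"
    and w_bdd: "\<exists>B. \<forall>x. \<bar>weight p q x\<bar> \<le> B"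
    and M_prob: "prob_space M"
    and Y_meas: "\<And>n. Y n \<in> measurable M borel"
    and Y0: "\<And>\<omega>. \<omega> \<in> space M \<Longrightarrow> Y 0 \<omega> = y0"
    and tail: "\<And>f n x. f \<in> borel_measurable borel \<Longrightarrow> (\<forall>z. \<bar>f z\<bar> \<le> 1) \<Longrightarrow> x > 0 \<Longrightarrow>
        measure M {\<omega> \<in> space M. \<bar>emp_proc (density \<mu> (\<lambda>x. ennreal (q x))) Y n f \<omega>\<bar> > x}
        \<le> (let s = (\<integral>z. (f z)\<^sup>2 \<partial>(density \<mu> (\<lambda>x. ennreal (q x))))
           in if s = 0 then 0 else C * exp (- (x\<^sup>2 / (C * s))))"
    and w_cont: "continuous_on UNIV (weight p q)"
    and phi_bdd: "\<exists>B. \<forall>x. measure (density \<mu> (\<lambda>x. ennreal (q x)))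
                              {z. weight p q z \<le> weight p q x} \<le> B * (weight p q x)\<^sup>2"
    and g_cont: "continuous_on UNIV g"
    and g_bdd: "\<And>x. \<bar>g x\<bar> \<le> 1"
  shows "\<exists>K::real. \<forall>n. (\<integral>\<^sup>+ \<omega>. (SUP x. ennreal \<bar>emp_proc (density \<mu> (\<lambda>x. ennreal (q x))) Y n
                (H_g (weight p q) g x) \<omega>\<bar>) \<partial>M) \<le> ennreal K"
proof -
  obtain B where B: "\<And>x. \<bar>weight p q x\<bar> \<le> B" using w_bdd by blast
  interpret truncated_weight_family "density \<mu> (\<lambda>x. ennreal (q x))" M Y "max 1 C" "weight p q" B
  proof (intro truncated_weight_family.intro subgaussian_empirical_process.intro
      truncated_weight_family_axioms.intro)
    show "measure M {\<omega> \<in> space M. \<bar>emp_proc (density \<mu> (\<lambda>x. ennreal (q x))) Y n f \<omega>\<bar> > x}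
        \<le> max 1 C * exp (-(x\<^sup>2/(max 1 C * \<sigma>)))"
      if "f \<in> borel_measurable borel" "\<forall>z. \<bar>f z\<bar> \<le> 1" "0 < x" "0 < \<sigma>"
        "(\<integral>z. (f z)\<^sup>2 \<partial>density \<mu> (\<lambda>x. ennreal (q x))) \<le> \<sigma>" for f n x \<sigma>
    proof -
      define s where "s = (\<integral>z. (f z)\<^sup>2 \<partial>density \<mu> (\<lambda>x. ennreal (q x)))"
      have "0 \<le> s" unfolding s_def by (rule integral_nonneg_AE) simp
      then have "(if s = 0 then 0 else C * exp (- (x\<^sup>2 / (C * s)))) \<le> max 1 C * exp (-(x\<^sup>2/(max 1 C * \<sigma>)))"
        using that(4,5) unfolding s_def[symmetric] by (intro subgaussian_bound_relax)
      then show ?thesis using tail[OF that(1-3), of n] unfolding Let_def s_def by linarith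
    qed
    show "weight p q \<in> borel_measurable borel"
      unfolding weight_def[abs_def] using p_meas q_meas by measurable
    show "0 \<le> weight p q x" and "weight p q x \<le> B" for x
      using p_nonneg[of x] q_nonneg[of x] B[of x] by (simp_all add: weight_def)
  qed (simp_all add: piY_prob sets_mu M_prob Y_meas)
  have "g \<in> borel_measurable borel" using g_cont by (rule borel_measurable_continuous_onI)
  then show ?thesis using g_bdd nn_integral_sup_emp_proc_H_g_le by blast
qed

end
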